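(* For every $n\ge1$, every $n$-person weakly totally tight game form $g: X_1\times\cdots\times X_n\to A$ is assignable.
   Context: Let $X_1,\dots,X_n$ and $A$ be finite nonempty sets. An $n$-person game form is a map $g: X_1\times\cdots\times X_n\to A$. $g$ is assignable if there exist functions $g_i: X_i\to A$, $i=1,\dots,n$, such that for every $x=(x_1,\dots,x_n)\in X_1\times\cdots\times X_n$ there is $i$ with $g(x)=g_i(x_i)$. For $i\in[n]$ write $X_{-i}=\prod_{t\neq i}X_t$, and for $s\in X_i$, $y\in X_{-i}$ write $(s,y)$ for the profile with $i$-th coordinate $s$ and other coordinates $y$. $g$ is weakly totally tight (WTT) if for every $i\in[n]$, all $s\neq s'$ in $X_i$ and all $y\neq y'$ in $X_{-i}$, at least one of the equalities $g(s,y)=g(s,y')$, $g(s,y)=g(s',y)$, $g(s',y')=g(s',y)$, $g(s',y')=g(s,y')$ holds. *)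

theory Defs
  imports "HOL-Library.FuncSet"
begin

text \<open>A profile is an element of PiE {..<n} X; a profile of the other players
 (an element of X_{-i}) is an element of PiE ({..<n} - {i}) X, and the
 combined profile (s,y) is y(i := s).\<close>

definition profiles :: "nat \<Rightarrow> (nat \<Rightarrow> 'x set) \<Rightarrow> (nat \<Rightarrow> 'x) set" where
  "profiles n X = PiE {..<n} X"

definition others :: "nat \<Rightarrow> (nat \<Rightarrow> 'x set) \<Rightarrow> nat \<Rightarrow> (nat \<Rightarrow> 'x) set" where
  "others n X i = PiE ({..<n} - {i}) X"

definition game_form :: "nat \<Rightarrow> (nat \<Rightarrow> 'x set) \<Rightarrow> 'a set \<Rightarrow> ((nat \<Rightarrow> 'x) \<Rightarrow> 'a) \<Rightarrow> bool" where
  "game_form n X A g \<longleftrightarrow>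
     (\<forall>i<n. finite (X i) \<and> X i \<noteq> {}) \<and> finite A \<and> A \<noteq> {} \<and>
     (\<forall>x\<in>profiles n X. g x \<in> A)"

definition assignable :: "nat \<Rightarrow> (nat \<Rightarrow> 'x set) \<Rightarrow> 'a set \<Rightarrow> ((nat \<Rightarrow> 'x) \<Rightarrow> 'a) \<Rightarrow> bool" where
  "assignable n X A g \<longleftrightarrow>
     (\<exists>gi :: nat \<Rightarrow> 'x \<Rightarrow> 'a. (\<forall>i<n. \<forall>s\<in>X i. gi i s \<in> A) \<and>
        (\<forall>x\<in>profiles n X. \<exists>i<n. g x = gi i (x i)))"

definition WTT :: "nat \<Rightarrow> (nat \<Rightarrow> 'x set) \<Rightarrow> ((nat \<Rightarrow> 'x) \<Rightarrow> 'a) \<Rightarrow> bool" where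
  "WTT n X g \<longleftrightarrow>
     (\<forall>i<n. \<forall>s\<in>X i. \<forall>s'\<in>X i. \<forall>y\<in>others n X i. \<forall>y'\<in>others n X i.
        s \<noteq> s' \<longrightarrow> y \<noteq> y' \<longrightarrow>
        (g (y(i := s)) = g (y'(i := s)) \<or>
         g (y(i := s)) = g (y(i := s')) \<or>
         g (y'(i := s')) = g (y(i := s')) \<or>
         g (y'(i := s')) = g (y'(i := s))))"

end

theory Submission
  imports Defs
begin

text \<open>
  Seen from one player j, a WTT game form is a matrix whose rows are j's strategies and whose
  columns are all profiles, satisfying the 2x2 condition for every pair of rows and columns.
  Such a matrix has row labels with the property that in every column any two rows either agree
  or one of them shows its label. The labels are chosen one row at a time, keeping the invariant
  that a row shows its label wherever it disagrees with a row that is non-constant on their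
  disagreement columns. The columns on which a new row is forced to show its label in this way,
  or because an already labelled row shows something other than its label there, all carry the
  same entry of the new row (a case analysis of the 2x2 condition), and that entry is its label.

  Now fix a player i and let every other player j claim the profiles x with g x = P_j(x_j).
  On unclaimed profiles g depends only on x_i: two unclaimed profiles with the same i-th
  coordinate are joined by changing one coordinate j at a time, and the labels P_j together
  with WTT for player j keep the value of g unchanged. So g_j = P_j for j \<noteq> i, with g_i(s) the
  common value of g on the unclaimed profiles with x_i = s, is an assignment.
\<close>

locale wtt_matrix =
  fixes M :: "'s \<Rightarrow> 'y \<Rightarrow> 'a" and S :: "'s set" and Y :: "'y set"
  assumes wtt: "\<lbrakk>s \<in> S; s' \<in> S; y \<in> Y; y' \<in> Y\<rbrakk> \<Longrightarrow>
     M s y = M s y' \<or> M s y = M s' y \<or> M s' y' = M s' y \<or> M s' y' = M s y'"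
begin

definition disagree :: "'s \<Rightarrow> 's \<Rightarrow> 'y set" where
  "disagree s s' = {y \<in> Y. M s y \<noteq> M s' y}"

definition varies :: "'s \<Rightarrow> 's \<Rightarrow> bool" where
  "varies s' s \<longleftrightarrow> (\<exists>y1\<in>disagree s s'. \<exists>y2\<in>disagree s s'. M s' y1 \<noteq> M s' y2)"

definition fits :: "'s \<Rightarrow> 'a \<Rightarrow> bool" where
  "fits s v \<longleftrightarrow> (\<forall>s'\<in>S. varies s' s \<longrightarrow> (\<forall>y\<in>disagree s s'. M s y = v))"

definition separating :: "'s set \<Rightarrow> ('s \<Rightarrow> 'a) \<Rightarrow> bool" where
  "separating T P \<longleftrightarrow>
     (\<forall>s1\<in>T. \<forall>s2\<in>T. \<forall>y\<in>Y. M s1 y = M s2 y \<or> M s1 y = P s1 \<or> M s2 y = P s2)"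

definition forced :: "'s set \<Rightarrow> ('s \<Rightarrow> 'a) \<Rightarrow> 's \<Rightarrow> 'y \<Rightarrow> bool" where
  "forced T P s0 y \<longleftrightarrow>
     (\<exists>s'\<in>S. y \<in> disagree s0 s' \<and> varies s' s0) \<or> (\<exists>s\<in>T. y \<in> disagree s0 s \<and> M s y \<noteq> P s)"

lemma disagree_sym: "disagree s s' = disagree s' s"
  unfolding disagree_def by auto

lemma disagree_pair_cases:
  "\<lbrakk>s \<in> S; s' \<in> S; y \<in> disagree s s'; y' \<in> disagree s s'\<rbrakk> \<Longrightarrow> M s y = M s y' \<or> M s' y = M s' y'"
  using wtt[of s s' y y'] by (auto simp: disagree_def)

lemma const_on_disagree_if_varies:
  assumes "s \<in> S" "s' \<in> S" "varies s' s" "y \<in> disagree s s'" "y' \<in> disagree s s'"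
  shows "M s y = M s y'"
proof (rule ccontr)
  assume ne: "M s y \<noteq> M s y'"
  from \<open>varies s' s\<close> obtain t t' where t: "t \<in> disagree s s'" "t' \<in> disagree s s'" "M s' t \<noteq> M s' t'"
    unfolding varies_def by blast
  have "M s y = M s t \<or> M s' y = M s' t" "M s y = M s t' \<or> M s' y = M s' t'"
    "M s y' = M s t \<or> M s' y' = M s' t" "M s y' = M s t' \<or> M s' y' = M s' t'"
    "M s t = M s t' \<or> M s' t = M s' t'"
    using disagree_pair_cases assms t by blast+
  then show False using ne t(3) by metis
qed

lemma forced_by_two_varying:
  assumes S: "s0 \<in> S" "s1 \<in> S" "s2 \<in> S" and var: "varies s1 s0" "varies s2 s0"
    and y1: "y1 \<in> disagree s0 s1" and y2: "y2 \<in> disagree s0 s2"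
  shows "M s0 y1 = M s0 y2"
proof (rule ccontr)
  assume ne: "M s0 y1 \<noteq> M s0 y2"
  have c1: "M s0 y = M s0 y1" if "y \<in> disagree s0 s1" for y
    using const_on_disagree_if_varies S var y1 that by blast
  have c2: "M s0 y = M s0 y2" if "y \<in> disagree s0 s2" for y
    using const_on_disagree_if_varies S var y2 that by blast
  from var obtain t t' u u' where
    t: "t \<in> disagree s0 s1" "t' \<in> disagree s0 s1" "M s1 t \<noteq> M s1 t'" and
    u: "u \<in> disagree s0 s2" "u' \<in> disagree s0 s2" "M s2 u \<noteq> M s2 u'"
    unfolding varies_def by blast
  have Y: "t \<in> Y" "t' \<in> Y" "u \<in> Y" "u' \<in> Y" using t u by (auto simp: disagree_def)
  have m: "M s0 t = M s0 y1" "M s0 t' = M s0 y1" "M s0 u = M s0 y2" "M s0 u' = M s0 y2"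
    using c1 c2 t u by blast+
  then have "t \<notin> disagree s0 s2" "t' \<notin> disagree s0 s2" "u \<notin> disagree s0 s1" "u' \<notin> disagree s0 s1"
    using c1 c2 ne by metis+
  then have e: "M s2 t = M s0 y1" "M s2 t' = M s0 y1" "M s1 u = M s0 y2" "M s1 u' = M s0 y2"
    "M s1 t \<noteq> M s0 y1" "M s1 t' \<noteq> M s0 y1" "M s2 u \<noteq> M s0 y2" "M s2 u' \<noteq> M s0 y2"
    using Y m t u by (auto simp: disagree_def)
  have "M s1 t = M s0 y2 \<or> M s2 u = M s0 y1" using wtt[of s1 s2 t u] S Y e by auto
  moreover have "M s1 t' = M s0 y2 \<or> M s2 u = M s0 y1" using wtt[of s1 s2 t' u] S Y e by auto
  moreover have "M s1 t = M s0 y2 \<or> M s2 u' = M s0 y1" using wtt[of s1 s2 t u'] S Y e by auto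
  moreover have "M s1 t' = M s0 y2 \<or> M s2 u' = M s0 y1" using wtt[of s1 s2 t' u'] S Y e by auto
  ultimately show False using t(3) u(3) by metis
qed

lemma const_on_disagree_if_fits:
  assumes "s0 \<in> S" "s \<in> S" "fits s w" "y \<in> disagree s0 s" "M s y \<noteq> w" "y' \<in> disagree s0 s"
  shows "M s0 y' = M s0 y"
proof -
  have "\<not> varies s0 s" using assms unfolding fits_def by (metis disagree_sym)
  then show ?thesis using assms(4,6) unfolding varies_def by (metis disagree_sym)
qed

lemma forced_by_varying_and_fitting:
  assumes S: "s0 \<in> S" "s' \<in> S" "s \<in> S" and var: "varies s' s0"
    and y1: "y1 \<in> disagree s0 s'" and y2: "y2 \<in> disagree s0 s"
    and fit: "fits s w" and nw: "M s y2 \<noteq> w"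
  shows "M s0 y1 = M s0 y2"
proof (rule ccontr)
  assume ne: "M s0 y1 \<noteq> M s0 y2"
  have c1: "M s0 y = M s0 y1" if "y \<in> disagree s0 s'" for y
    using const_on_disagree_if_varies S var y1 that by blast
  have c2: "M s0 y = M s0 y2" if "y \<in> disagree s0 s" for y
    using const_on_disagree_if_fits S fit y2 nw that by blast
  from var obtain t t' where t: "t \<in> disagree s0 s'" "t' \<in> disagree s0 s'" "M s' t \<noteq> M s' t'"
    unfolding varies_def by blast
  have Y: "t \<in> Y" "t' \<in> Y" "y2 \<in> Y" using t y2 by (auto simp: disagree_def)
  have m: "M s0 t = M s0 y1" "M s0 t' = M s0 y1" using c1 t by blast+
  then have "t \<notin> disagree s0 s" "t' \<notin> disagree s0 s" "y2 \<notin> disagree s0 s'"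
    using c1 c2 ne by metis+
  then have "t \<in> disagree s s'" "t' \<in> disagree s s'" "y2 \<in> disagree s s'"
    using Y m t y2 by (auto simp: disagree_def)
  moreover from this t(3) have "varies s' s" unfolding varies_def by blast
  ultimately have "M s y2 = w" using fit S unfolding fits_def by blast
  with nw show False ..
qed

lemma forced_by_two_fitting:
  assumes S: "s0 \<in> S" "s1 \<in> S" "s2 \<in> S"
    and y1: "y1 \<in> disagree s0 s1" and y2: "y2 \<in> disagree s0 s2"
    and fit: "fits s1 w1" "fits s2 w2" and nw: "M s1 y1 \<noteq> w1" "M s2 y2 \<noteq> w2"
    and sep: "\<And>y. y \<in> Y \<Longrightarrow> M s1 y = M s2 y \<or> M s1 y = w1 \<or> M s2 y = w2"
  shows "M s0 y1 = M s0 y2"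
proof (rule ccontr)
  assume ne: "M s0 y1 \<noteq> M s0 y2"
  have "y1 \<notin> disagree s0 s2" "y2 \<notin> disagree s0 s1"
    using const_on_disagree_if_fits[OF S(1,3) fit(2) y2 nw(2)]
      const_on_disagree_if_fits[OF S(1,2) fit(1) y1 nw(1)] ne by metis+
  moreover have Y: "y1 \<in> Y" "y2 \<in> Y" using y1 y2 by (auto simp: disagree_def)
  ultimately have "M s2 y1 = M s0 y1" "M s1 y2 = M s0 y2" "M s1 y1 \<noteq> M s0 y1" "M s2 y2 \<noteq> M s0 y2"
    using y1 y2 by (auto simp: disagree_def)
  moreover have "w2 = M s0 y1" "w1 = M s0 y2" using sep[OF Y(1)] sep[OF Y(2)] calculation nw by auto
  ultimately show False using wtt[of s1 s2 y1 y2] S Y nw by auto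
qed

lemma forced_cols_agree:
  assumes T: "T \<subseteq> S" "\<forall>s\<in>T. fits s (P s)" "separating T P" and s0: "s0 \<in> S"
    and "forced T P s0 y1" "forced T P s0 y2"
  shows "M s0 y1 = M s0 y2"
proof -
  have by_varying: "M s0 y = M s0 y'"
    if "s' \<in> S" "varies s' s0" "y \<in> disagree s0 s'" "forced T P s0 y'" for s' y y'
    using that forced_by_two_varying[OF s0] forced_by_varying_and_fitting[OF s0] T
    unfolding forced_def by blast
  have by_fitting: "M s0 y = M s0 y'"
    if "s \<in> T" "y \<in> disagree s0 s" "M s y \<noteq> P s" "s' \<in> T" "y' \<in> disagree s0 s'" "M s' y' \<noteq> P s'"
    for s s' y y'
    using that forced_by_two_fitting[OF s0] T unfolding separating_def by blast
  show ?thesis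
    using assms(5,6) by_varying by_fitting unfolding forced_def by metis
qed

lemma forced_col_in_Y: "forced T P s0 y \<Longrightarrow> y \<in> Y"
  unfolding forced_def disagree_def by blast

lemma fitting_separating_labels_exist:
  assumes "finite T" "T \<subseteq> S" and a0: "a0 \<in> A" and MA: "\<And>s y. s \<in> S \<Longrightarrow> y \<in> Y \<Longrightarrow> M s y \<in> A"
  shows "\<exists>P. (\<forall>s\<in>T. P s \<in> A \<and> fits s (P s)) \<and> separating T P"
  using assms(1,2)
proof (induction T rule: finite_subset_induct')
  case empty
  show ?case by (simp add: separating_def)
next
  case (insert s0 T)
  then obtain P where P: "\<forall>s\<in>T. P s \<in> A \<and> fits s (P s)" "separating T P"
    by blast
  have "\<exists>v. v \<in> A \<and> (\<forall>y. forced T P s0 y \<longrightarrow> M s0 y = v)"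
  proof (cases "\<exists>y. forced T P s0 y")
    case True
    then obtain y0 where y0: "forced T P s0 y0" ..
    have "M s0 y = M s0 y0" if "forced T P s0 y" for y
      using forced_cols_agree[OF insert.hyps(3)] P insert.hyps(2) that y0 by blast
    moreover have "M s0 y0 \<in> A" using MA[OF insert.hyps(2) forced_col_in_Y[OF y0]] .
    ultimately show ?thesis by blast
  qed (use a0 in blast)
  then obtain v where v: "v \<in> A" "\<And>y. forced T P s0 y \<Longrightarrow> M s0 y = v"
    by blast
  have "fits s0 v"
    unfolding fits_def using v(2) unfolding forced_def by blast
  have "separating (insert s0 T) (P(s0 := v))"
    unfolding separating_def
  proof (intro ballI)
    fix s1 s2 y assume s12: "s1 \<in> insert s0 T" "s2 \<in> insert s0 T" and y: "y \<in> Y"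
    have new: "M s0 y = M s y \<or> M s0 y = v \<or> M s y = P s" if "s \<in> T" for s
      using v(2)[of y] that y unfolding forced_def disagree_def by blast
    have "s \<noteq> s0" if "s \<in> T" for s using that \<open>s0 \<notin> T\<close> by blast
    then consider "s1 = s0" "s2 = s0" | "s1 = s0" "s2 \<in> T" "s2 \<noteq> s0" | "s1 \<in> T" "s1 \<noteq> s0" "s2 = s0"
      | "s1 \<in> T" "s1 \<noteq> s0" "s2 \<in> T" "s2 \<noteq> s0"
      using s12 by blast
    then show "M s1 y = M s2 y \<or> M s1 y = (P(s0 := v)) s1 \<or> M s2 y = (P(s0 := v)) s2"
      by cases (use new[of s1] new[of s2] P(2) y in \<open>auto simp: separating_def\<close>)
  qed
  moreover have "\<forall>s\<in>insert s0 T. (P(s0 := v)) s \<in> A \<and> fits s ((P(s0 := v)) s)"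
    using P(1) v(1) \<open>fits s0 v\<close> \<open>s0 \<notin> T\<close> by auto
  ultimately show ?case
    by (intro exI[of _ "P(s0 := v)"] conjI)
qed

end

lemma profiles_upd: "\<lbrakk>x \<in> profiles n X; j < n; s \<in> X j\<rbrakk> \<Longrightarrow> x(j := s) \<in> profiles n X"
  unfolding profiles_def by (auto simp: PiE_iff extensional_def)

lemma profiles_upd_undefined: "\<lbrakk>x \<in> profiles n X; j < n\<rbrakk> \<Longrightarrow> x(j := undefined) \<in> others n X j"
  unfolding profiles_def others_def by (auto simp: PiE_iff extensional_def)

lemma profiles_eqI: "\<lbrakk>x \<in> profiles n X; x' \<in> profiles n X; \<And>j. j < n \<Longrightarrow> x j = x' j\<rbrakk> \<Longrightarrow> x = x'"
  unfolding profiles_def by (rule PiE_ext) auto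

lemma WTT_profilesD:
  assumes "WTT n X g" "j < n" "x \<in> profiles n X" "x' \<in> profiles n X" "s \<in> X j" "s' \<in> X j"
  shows "g (x(j := s)) = g (x'(j := s)) \<or> g (x(j := s)) = g (x(j := s')) \<or>
         g (x'(j := s')) = g (x(j := s')) \<or> g (x'(j := s')) = g (x'(j := s))"
proof -
  let ?y = "x(j := undefined)" and ?y' = "x'(j := undefined)"
  have "g (?y(j := s)) = g (?y'(j := s)) \<or> g (?y(j := s)) = g (?y(j := s')) \<or>
        g (?y'(j := s')) = g (?y(j := s')) \<or> g (?y'(j := s')) = g (?y'(j := s))"
  proof (cases "s = s' \<or> ?y = ?y'")
    case False
    then show ?thesis
      using assms profiles_upd_undefined[of x n X j] profiles_upd_undefined[of x' n X j]
      unfolding WTT_def by blast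
  qed metis
  then show ?thesis by simp
qed

definition separating_labels ::
    "nat \<Rightarrow> (nat \<Rightarrow> 'x set) \<Rightarrow> ((nat \<Rightarrow> 'x) \<Rightarrow> 'a) \<Rightarrow> nat \<Rightarrow> ('x \<Rightarrow> 'a) \<Rightarrow> bool" where
  "separating_labels n X g j P \<longleftrightarrow>
     (\<forall>x\<in>profiles n X. \<forall>s\<in>X j. g x = g (x(j := s)) \<or> g x = P (x j) \<or> g (x(j := s)) = P s)"

lemma separating_labels_exist:
  assumes gf: "game_form n X A g" and wtt: "WTT n X g" and j: "j < n"
  shows "\<exists>P. (\<forall>s\<in>X j. P s \<in> A) \<and> separating_labels n X g j P"
proof -
  interpret wtt_matrix "\<lambda>s x. g (x(j := s))" "X j" "profiles n X"
    by unfold_locales (rule WTT_profilesD[OF wtt j])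
  obtain a0 where "a0 \<in> A" using gf unfolding game_form_def by blast
  moreover have "finite (X j)" using gf j unfolding game_form_def by blast
  moreover have "g (x(j := s)) \<in> A" if "s \<in> X j" "x \<in> profiles n X" for s x
    using gf profiles_upd[OF that(2) j that(1)] unfolding game_form_def by blast
  ultimately obtain P where "\<forall>s\<in>X j. P s \<in> A" "separating (X j) P"
    using fitting_separating_labels_exist[of "X j" a0 A] by blast
  moreover have "separating_labels n X g j P"
    unfolding separating_labels_def
  proof (intro ballI)
    fix x s assume "x \<in> profiles n X" "s \<in> X j"
    moreover have "x j \<in> X j" using \<open>x \<in> profiles n X\<close> j unfolding profiles_def by auto
    ultimately show "g x = g (x(j := s)) \<or> g x = P (x j) \<or> g (x(j := s)) = P s"
      using \<open>separating (X j) P\<close> unfolding separating_def by fastforce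
  qed
  ultimately show ?thesis by blast
qed

lemma eq_if_differ_only_at_unlabelled:
  assumes wtt: "WTT n X g"
    and labels: "\<And>j. j < n \<Longrightarrow> j \<noteq> i \<Longrightarrow> separating_labels n X g j (P j)"
    and "x1 \<in> profiles n X" "x2 \<in> profiles n X"
    and "\<And>j. j < n \<Longrightarrow> x1 j \<noteq> x2 j \<Longrightarrow> j \<noteq> i \<and> g x1 \<noteq> P j (x1 j) \<and> g x2 \<noteq> P j (x2 j)"
  shows "g x1 = g x2"
  using assms(3-)
proof (induction "card {j. j < n \<and> x1 j \<noteq> x2 j}" arbitrary: x1 x2 rule: less_induct)
  case less
  note x1 = less.prems(1) and x2 = less.prems(2) and unl = less.prems(3)
  show ?case
  proof (cases "\<exists>j<n. x1 j \<noteq> x2 j")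
    case False
    then show ?thesis using profiles_eqI[OF x1 x2] by auto
  next
    case True
    then obtain j where j: "j < n" "x1 j \<noteq> x2 j" by blast
    with unl have ji: "j \<noteq> i" and gx1: "g x1 \<noteq> P j (x1 j)" and gx2: "g x2 \<noteq> P j (x2 j)" by auto
    define y3 where "y3 = x1(j := x2 j)"
    define y4 where "y4 = x2(j := x1 j)"
    have in_X: "x1 j \<in> X j" "x2 j \<in> X j" using x1 x2 j unfolding profiles_def by auto
    have y34: "y3 \<in> profiles n X" "y4 \<in> profiles n X"
      unfolding y3_def y4_def using profiles_upd[OF x1 j(1) in_X(2)] profiles_upd[OF x2 j(1) in_X(1)] .
    have "{k. k < n \<and> y3 k \<noteq> x2 k} \<subset> {k. k < n \<and> x1 k \<noteq> x2 k}"
      "{k. k < n \<and> x1 k \<noteq> y4 k} \<subset> {k. k < n \<and> x1 k \<noteq> x2 k}"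
      using j unfolding y3_def y4_def by auto
    then have closer: "card {k. k < n \<and> y3 k \<noteq> x2 k} < card {k. k < n \<and> x1 k \<noteq> x2 k}"
      "card {k. k < n \<and> x1 k \<noteq> y4 k} < card {k. k < n \<and> x1 k \<noteq> x2 k}"
      by (auto intro: psubset_card_mono)
    have "g x1 = g y3 \<or> g x1 = P j (x1 j) \<or> g y3 = P j (x2 j)"
      "g x2 = g y4 \<or> g x2 = P j (x2 j) \<or> g y4 = P j (x1 j)"
      using labels[OF j(1) ji] x1 x2 in_X unfolding separating_labels_def y3_def y4_def by blast+
    with gx1 gx2 have sep3: "g x1 = g y3 \<or> g y3 = P j (x2 j)"
      and sep4: "g x2 = g y4 \<or> g y4 = P j (x1 j)" by auto
    have "g x1 = g y4 \<or> g x1 = g y3 \<or> g x2 = g y3 \<or> g x2 = g y4"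
      using WTT_profilesD[OF wtt j(1) x1 x2 in_X] unfolding y3_def y4_def by simp
    moreover have "g y3 = g x2" if "g x1 = g y3"
    proof (rule less.hyps[OF closer(1) y34(1) x2])
      fix k assume "k < n" "y3 k \<noteq> x2 k"
      then show "k \<noteq> i \<and> g y3 \<noteq> P k (y3 k) \<and> g x2 \<noteq> P k (x2 k)"
        using unl[of k] that unfolding y3_def by (auto split: if_splits)
    qed
    moreover have "g x1 = g y4" if "g x2 = g y4"
    proof (rule less.hyps[OF closer(2) x1 y34(2)])
      fix k assume "k < n" "x1 k \<noteq> y4 k"
      then show "k \<noteq> i \<and> g x1 \<noteq> P k (x1 k) \<and> g y4 \<noteq> P k (y4 k)"
        using unl[of k] that unfolding y4_def by (auto split: if_splits)
    qed
    ultimately show ?thesis using sep3 sep4 gx1 gx2 by metis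
  qed
qed

lemma assignable_if_separating_labels:
  assumes gf: "game_form n X A g" and wtt: "WTT n X g" and i: "i < n"
    and labels: "\<And>j. j < n \<Longrightarrow> j \<noteq> i \<Longrightarrow> (\<forall>s\<in>X j. P j s \<in> A) \<and> separating_labels n X g j (P j)"
  shows "assignable n X A g"
proof -
  define unclaimed where
    "unclaimed x \<longleftrightarrow> x \<in> profiles n X \<and> (\<forall>j<n. j \<noteq> i \<longrightarrow> g x \<noteq> P j (x j))" for x
  have unclaimed_eq: "g x = g x'" if "unclaimed x" "unclaimed x'" "x i = x' i" for x x'
    using eq_if_differ_only_at_unlabelled[OF wtt, of i P x x'] labels that
    unfolding unclaimed_def by metis
  have "\<exists>a. a \<in> A \<and> (\<forall>x. unclaimed x \<and> x i = s \<longrightarrow> g x = a)" for s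
  proof (cases "\<exists>x. unclaimed x \<and> x i = s")
    case True
    then obtain x where "unclaimed x" "x i = s" by blast
    then show ?thesis
      using unclaimed_eq gf unfolding game_form_def unclaimed_def by metis
  qed (use gf in \<open>auto simp: game_form_def\<close>)
  then obtain gi where gi: "\<And>s. gi s \<in> A" "\<And>x. unclaimed x \<Longrightarrow> g x = gi (x i)"
    by metis
  show ?thesis
    unfolding assignable_def
  proof (intro exI[of _ "\<lambda>j. if j = i then gi else P j"] conjI allI impI ballI)
    fix x assume "x \<in> profiles n X"
    then show "\<exists>j<n. g x = (if j = i then gi else P j) (x j)"
      using gi(2) i unfolding unclaimed_def by (metis (full_types))
  qed (use gi(1) labels in auto)
qed

theorem mainTheorem10:
  fixes n :: nat and X :: "nat \<Rightarrow> 'x set" and A :: "'a set"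
    and g :: "(nat \<Rightarrow> 'x) \<Rightarrow> 'a"
  assumes "n \<ge> 1" and "game_form n X A g" and "WTT n X g"
  shows "assignable n X A g"
proof -
  obtain P where "\<And>j. j < n \<Longrightarrow> (\<forall>s\<in>X j. P j s \<in> A) \<and> separating_labels n X g j (P j)"
    using separating_labels_exist[OF assms(2,3)] by metis
  moreover have "n - 1 < n" using \<open>n \<ge> 1\<close> by simp
  ultimately show ?thesis
    using assignable_if_separating_labels[OF assms(2,3)] by blast
qed

end
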